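(* Let $n_1,n_2\ge 1$ be integers, $n=n_1+n_2$, and consider a uniformly random arrangement of $n_1$ symbols $x$ and $n_2$ symbols $y$ (all $\binom{n}{n_1}$ arrangements equally likely). Let $R_1$ and $R_2$ be the numbers of runs of $x$'s and of $y$'s, respectively, and $R_M=\max(R_1,R_2)$. Then $$E(R_M)=2+\frac{n(n_1-1)(n_2-1)-2n_1n_2}{n(n-1)},$$ $$\mathrm{Var}(R_M)=\frac{n_1n_2\left[n_1^3+n_2^3+n_1^3n_2+n_1n_2^3-n_1^2-n_2^2+2n_1^2n_2^2-5n_1^2n_2-5n_1n_2^2+6n_1n_2\right]}{n^2(n-1)^2(n-2)}.$$
   Context: A run is a maximal block of consecutive identical symbols in the arrangement. *)

theory Defs
  imports Complex_Main
begin

text \<open>An arrangement of n1 symbols x and n2 symbols y is a boolean list of length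
  n1 + n2 in which True (= x) occurs exactly n1 times.\<close>
definition arrangements :: "nat \<Rightarrow> nat \<Rightarrow> bool list set" where
  "arrangements n1 n2 = {xs. length xs = n1 + n2 \<and> count_list xs True = n1}"

text \<open>Number of runs (maximal blocks of consecutive equal symbols) of symbol a:
  the number of positions where a run of a starts.\<close>
definition runs :: "bool \<Rightarrow> bool list \<Rightarrow> nat" where
  "runs a xs = card {i. i < length xs \<and> xs ! i = a \<and> (i = 0 \<or> xs ! (i - 1) \<noteq> a)}"

definition RM :: "bool list \<Rightarrow> nat" where
  "RM xs = max (runs True xs) (runs False xs)"

definition unif_exp :: "'a set \<Rightarrow> ('a \<Rightarrow> real) \<Rightarrow> real" where
  "unif_exp A f = (\<Sum>a\<in>A. f a) / real (card A)"

definition unif_var :: "'a set \<Rightarrow> ('a \<Rightarrow> real) \<Rightarrow> real" where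
  "unif_var A f = unif_exp A (\<lambda>a. (f a - unif_exp A f)^2)"

end

theory Submission
  imports Defs
begin

(* Counting the starts of the runs of a symbol a gives 2 R_a = C + [x_1 = a] + [x_n = a], where
   C = changes xs is the number of positions i at which x_i and x_(i+1) differ.  Hence
   2 R_M = 1 + C + I with I = ends_agree xs = [x_1 = x_n], and the first two moments of R_M are
   linear combinations of probabilities that an arrangement has prescribed symbols at two, three
   or four given positions.  By exchangeability, the probability of x's on a set T and y's on a
   disjoint set U of positions is (n1)_|T| (n2)_|U| / (n)_(|T|+|U|), with falling factorials. *)

section \<open>Falling factorials and uniform expectation\<close>

definition falling_fact :: "nat \<Rightarrow> nat \<Rightarrow> real" where
  "falling_fact m k = (\<Prod>i<k. real m - real i)"

lemma falling_fact_0 [simp]: "falling_fact m 0 = 1"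
  by (simp add: falling_fact_def)

lemma falling_fact_Suc [simp]: "falling_fact m (Suc k) = falling_fact m k * (real m - real k)"
  by (simp add: falling_fact_def)

lemma falling_fact_eq_0: "m < k \<Longrightarrow> falling_fact m k = 0"
  unfolding falling_fact_def by (rule prod_zero) auto

lemma falling_fact_pos: "k \<le> m \<Longrightarrow> falling_fact m k > 0"
  unfolding falling_fact_def by (rule prod_pos) auto

lemma falling_fact_eq_fact_div: "k \<le> m \<Longrightarrow> falling_fact m k = fact m / fact (m - k)"
proof (induction k)
  case (Suc k)
  then have "fact (m - k) = (real m - real k) * (fact (m - Suc k) :: real)"
    by (simp add: fact_reduce)
  with Suc show ?case by simp
qed simp

lemma binomial_mult_falling_fact:
  assumes "t \<le> n1" "u \<le> n2"
  shows "real ((n1 + n2 - t - u) choose (n1 - t)) * falling_fact (n1 + n2) (t + u)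
       = real ((n1 + n2) choose n1) * falling_fact n1 t * falling_fact n2 u"
proof -
  have "real ((n1 + n2 - t - u) choose (n1 - t)) = fact (n1 + n2 - t - u) / (fact (n1 - t) * fact (n2 - u))"
    using assms by (subst binomial_fact) (auto simp: algebra_simps intro!: arg_cong[where f = fact])
  moreover have "real ((n1 + n2) choose n1) = fact (n1 + n2) / (fact n1 * fact n2)"
    by (subst binomial_fact) auto
  ultimately show ?thesis
    using assms by (simp add: falling_fact_eq_fact_div field_simps)
qed

lemma unif_exp_cong: "(\<And>a. a \<in> A \<Longrightarrow> f a = g a) \<Longrightarrow> unif_exp A f = unif_exp A g"
  unfolding unif_exp_def by (simp cong: sum.cong)

lemma unif_exp_add: "unif_exp A (\<lambda>a. f a + g a) = unif_exp A f + unif_exp A g"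
  unfolding unif_exp_def by (simp add: sum.distrib add_divide_distrib)

lemma unif_exp_cmult: "unif_exp A (\<lambda>a. c * f a) = c * unif_exp A f"
  unfolding unif_exp_def by (simp add: sum_distrib_left)

lemma unif_exp_sum: "unif_exp A (\<lambda>a. \<Sum>i\<in>I. f i a) = (\<Sum>i\<in>I. unif_exp A (f i))"
  unfolding unif_exp_def by (subst sum.swap) (simp add: sum_divide_distrib)

lemma unif_exp_const: "finite A \<Longrightarrow> A \<noteq> {} \<Longrightarrow> unif_exp A (\<lambda>_. c) = c"
  unfolding unif_exp_def by simp

lemma unif_exp_of_bool:
  "finite A \<Longrightarrow> unif_exp A (\<lambda>a. of_bool (P a)) = real (card {a \<in> A. P a}) / real (card A)"
  unfolding unif_exp_def by (simp add: Int_def conj_commute)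

lemma unif_var_eq:
  assumes "finite A" "A \<noteq> {}"
  shows "unif_var A f = unif_exp A (\<lambda>a. (f a)^2) - (unif_exp A f)^2"
proof -
  define m where "m = unif_exp A f"
  have "unif_var A f = unif_exp A (\<lambda>a. (f a)^2 + (-2 * m) * f a + m^2)"
    unfolding unif_var_def m_def[symmetric] by (rule unif_exp_cong) (simp add: power2_eq_square algebra_simps)
  also have "\<dots> = unif_exp A (\<lambda>a. (f a)^2) + (-2 * m) * m + m^2"
    by (simp only: unif_exp_add unif_exp_cmult unif_exp_const[OF assms] m_def[symmetric])
  also have "\<dots> = unif_exp A (\<lambda>a. (f a)^2) - m^2"
    by (simp add: power2_eq_square)
  finally show ?thesis unfolding m_def .
qed

lemma card_subsets_containing_avoiding:
  assumes "finite X" "T \<subseteq> X" "U \<subseteq> X" "T \<inter> U = {}" "card T \<le> k"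
  shows "card {S. S \<subseteq> X \<and> card S = k \<and> T \<subseteq> S \<and> S \<inter> U = {}}
         = (card X - card T - card U) choose (k - card T)"
proof -
  have fin: "finite T" "finite U" using assms finite_subset by blast+
  have "bij_betw (\<lambda>S. S - T) {S. S \<subseteq> X \<and> card S = k \<and> T \<subseteq> S \<and> S \<inter> U = {}}
          {R. R \<subseteq> X - T - U \<and> card R = k - card T}"
  proof (rule bij_betw_byWitness[where f' = "\<lambda>R. R \<union> T"])
    show "(\<lambda>S. S - T) ` {S. S \<subseteq> X \<and> card S = k \<and> T \<subseteq> S \<and> S \<inter> U = {}}
        \<subseteq> {R. R \<subseteq> X - T - U \<and> card R = k - card T}"
      using fin by (auto simp: card_Diff_subset)
    show "(\<lambda>R. R \<union> T) ` {R. R \<subseteq> X - T - U \<and> card R = k - card T}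
        \<subseteq> {S. S \<subseteq> X \<and> card S = k \<and> T \<subseteq> S \<and> S \<inter> U = {}}"
    proof (rule image_subsetI)
      fix R assume R: "R \<in> {R. R \<subseteq> X - T - U \<and> card R = k - card T}"
      then have "card (R \<union> T) = card R + card T"
        using fin assms(1) by (intro card_Un_disjoint) (auto intro: finite_subset)
      with R assms show "R \<union> T \<in> {S. S \<subseteq> X \<and> card S = k \<and> T \<subseteq> S \<and> S \<inter> U = {}}"
        by auto
    qed
  qed auto
  then have "card {S. S \<subseteq> X \<and> card S = k \<and> T \<subseteq> S \<and> S \<inter> U = {}}
      = card (X - T - U) choose (k - card T)"
    using assms(1) by (simp add: bij_betw_same_card n_subsets)
  also have "card (X - T - U) = card X - card T - card U"
  proof -
    have "U \<subseteq> X - T" using assms by auto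
    then show ?thesis using assms fin by (simp add: card_Diff_subset)
  qed
  finally show ?thesis .
qed

lemma subsets_containing_eq_empty:
  assumes "finite X" "k < card T"
  shows "{S. S \<subseteq> X \<and> card S = k \<and> T \<subseteq> S \<and> S \<inter> U = {}} = {}"
  using assms by (auto dest: card_mono[OF finite_subset[OF _ assms(1)]])

lemma length_le_if_distinct_below:
  "distinct ps \<Longrightarrow> set ps \<subseteq> {..<n} \<Longrightarrow> length ps \<le> n"
  by (metis card_lessThan card_mono distinct_card finite_lessThan)

lemma sum_square_band:
  fixes h :: "nat \<Rightarrow> nat \<Rightarrow> real"
  assumes "\<And>i. i \<le> m \<Longrightarrow> h i i = a"
    and "\<And>i. i < m \<Longrightarrow> h i (Suc i) = b"
    and "\<And>i. i < m \<Longrightarrow> h (Suc i) i = b"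
    and "\<And>i j. i \<le> m \<Longrightarrow> j \<le> m \<Longrightarrow> Suc i < j \<or> Suc j < i \<Longrightarrow> h i j = c"
  shows "(\<Sum>i\<le>m. \<Sum>j\<le>m. h i j) = real (Suc m) * a + 2 * real m * b + real m * (real m - 1) * c"
  using assms
proof (induction m)
  case (Suc m)
  have "(\<Sum>j<m. h (Suc m) j) = real m * c" "(\<Sum>i<m. h i (Suc m)) = real m * c"
    using Suc.prems(4) by (simp_all add: sum.cong[where B = "{..<m}"])
  then have "(\<Sum>j\<le>m. h (Suc m) j) = b + real m * c" "(\<Sum>i\<le>m. h i (Suc m)) = b + real m * c"
    using Suc.prems(2,3) by (simp_all add: lessThan_Suc_atMost[symmetric])
  moreover have "(\<Sum>i\<le>m. \<Sum>j\<le>m. h i j) = real (Suc m) * a + 2 * real m * b + real m * (real m - 1) * c"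
    using Suc.prems by (intro Suc.IH) auto
  ultimately show ?case
    using Suc.prems(1)[of "Suc m"] by (simp add: sum.distrib algebra_simps)
qed simp

lemma sum_lessThan_ends_interior:
  fixes g :: "nat \<Rightarrow> real"
  assumes "g 0 = b" "g (Suc k) = b" "\<And>i. 0 < i \<Longrightarrow> i \<le> k \<Longrightarrow> g i = e"
  shows "(\<Sum>i<Suc (Suc k). g i) = 2 * b + real k * e"
proof -
  have "(\<Sum>i<k. g (Suc i)) = real k * e"
    using assms(3) by (simp add: sum.cong[where B = "{..<k}"])
  then show ?thesis
    unfolding sum.lessThan_Suc[of g "Suc k"] sum.lessThan_Suc_shift[of g k] using assms(1,2) by simp
qed

section \<open>Patterns in a random arrangement\<close>

lemma length_arrangements: "xs \<in> arrangements n1 n2 \<Longrightarrow> length xs = n1 + n2"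
  by (simp add: arrangements_def)

lemma finite_arrangements: "finite (arrangements n1 n2)"
proof (rule finite_subset)
  show "arrangements n1 n2 \<subseteq> {xs. set xs \<subseteq> UNIV \<and> length xs = n1 + n2}"
    by (auto simp: arrangements_def)
qed (rule finite_lists_length_eq, simp)

definition has_pattern :: "nat set \<Rightarrow> nat set \<Rightarrow> bool list \<Rightarrow> bool" where
  "has_pattern T U xs \<longleftrightarrow> (\<forall>k\<in>T. xs ! k) \<and> (\<forall>k\<in>U. \<not> xs ! k)"

lemma bij_betw_arrangements_subsets:
  assumes "T \<subseteq> {..<n1 + n2}" "U \<subseteq> {..<n1 + n2}"
  shows "bij_betw (\<lambda>xs. {i. i < length xs \<and> xs ! i})
     {xs \<in> arrangements n1 n2. has_pattern T U xs}
     {S. S \<subseteq> {..<n1 + n2} \<and> card S = n1 \<and> T \<subseteq> S \<and> S \<inter> U = {}}"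
proof (rule bij_betw_byWitness[where f' = "\<lambda>S. map (\<lambda>i. i \<in> S) [0..<n1 + n2]"])
  have count: "count_list xs True = card {i. i < length xs \<and> xs ! i}" for xs :: "bool list"
    by (simp add: count_list_eq_length_filter length_filter_conv_card)
  show "(\<lambda>xs. {i. i < length xs \<and> xs ! i}) ` {xs \<in> arrangements n1 n2. has_pattern T U xs}
     \<subseteq> {S. S \<subseteq> {..<n1 + n2} \<and> card S = n1 \<and> T \<subseteq> S \<and> S \<inter> U = {}}"
    using assms by (auto simp: arrangements_def has_pattern_def count)
  show "(\<lambda>S. map (\<lambda>i. i \<in> S) [0..<n1 + n2]) ` {S. S \<subseteq> {..<n1 + n2} \<and> card S = n1 \<and> T \<subseteq> S \<and> S \<inter> U = {}}
     \<subseteq> {xs \<in> arrangements n1 n2. has_pattern T U xs}"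
  proof (rule image_subsetI)
    fix S assume S: "S \<in> {S. S \<subseteq> {..<n1 + n2} \<and> card S = n1 \<and> T \<subseteq> S \<and> S \<inter> U = {}}"
    then have "{i. i < n1 + n2 \<and> map (\<lambda>i. i \<in> S) [0..<n1 + n2] ! i} = S" by auto
    with S assms show "map (\<lambda>i. i \<in> S) [0..<n1 + n2] \<in> {xs \<in> arrangements n1 n2. has_pattern T U xs}"
      by (auto simp: arrangements_def has_pattern_def count subset_iff)
  qed
qed (auto simp: arrangements_def intro: nth_equalityI)

lemma card_arrangements: "card (arrangements n1 n2) = (n1 + n2) choose n1"
  using bij_betw_same_card[OF bij_betw_arrangements_subsets[of "{}" n1 n2 "{}"]]
    card_subsets_containing_avoiding[of "{..<n1 + n2}" "{}" "{}" n1]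
  by (simp add: has_pattern_def)

lemma arrangements_ne_empty: "arrangements n1 n2 \<noteq> {}"
proof -
  have "card (arrangements n1 n2) > 0" by (simp add: card_arrangements)
  then show ?thesis by auto
qed

lemma unif_exp_const_arrangements: "unif_exp (arrangements n1 n2) (\<lambda>_. c) = c"
  by (rule unif_exp_const[OF finite_arrangements arrangements_ne_empty])

lemma unif_exp_has_pattern:
  assumes "T \<subseteq> {..<n1 + n2}" "U \<subseteq> {..<n1 + n2}" "T \<inter> U = {}"
  shows "unif_exp (arrangements n1 n2) (\<lambda>xs. of_bool (has_pattern T U xs))
       = falling_fact n1 (card T) * falling_fact n2 (card U) / falling_fact (n1 + n2) (card T + card U)"
proof -
  define n where "n = n1 + n2"
  define t where "t = card T"
  define u where "u = card U"
  define subsets where "subsets = {S. S \<subseteq> {..<n} \<and> card S = n1 \<and> T \<subseteq> S \<and> S \<inter> U = {}}"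
  have fin: "finite T" "finite U" using assms finite_subset by blast+
  have "t + u = card (T \<union> U)" using fin assms(3) by (simp add: t_def u_def card_Un_disjoint)
  also have "\<dots> \<le> n" using assms n_def by (metis card_lessThan card_mono finite_lessThan le_sup_iff)
  finally have tu: "t + u \<le> n" .
  have "card {xs \<in> arrangements n1 n2. has_pattern T U xs} = card subsets"
    using bij_betw_same_card[OF bij_betw_arrangements_subsets[OF assms(1,2)]] by (simp add: subsets_def n_def)
  then have "unif_exp (arrangements n1 n2) (\<lambda>xs. of_bool (has_pattern T U xs)) * falling_fact n (t + u)
      = real (card subsets) * falling_fact n (t + u) / real (n choose n1)"
    by (simp add: unif_exp_of_bool finite_arrangements card_arrangements n_def)
  also have "real (card subsets) * falling_fact n (t + u) = real (n choose n1) * falling_fact n1 t * falling_fact n2 u"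
  proof (cases "t \<le> n1")
    case True
    then have "card subsets = (n - t - u) choose (n1 - t)"
      using card_subsets_containing_avoiding[of "{..<n}" T U n1] assms by (simp add: subsets_def t_def u_def n_def)
    with True show ?thesis
      using binomial_mult_falling_fact[of t n1 u n2] tu by (cases "u \<le> n2") (auto simp: n_def falling_fact_eq_0)
  next
    case False
    then show ?thesis
      using subsets_containing_eq_empty[of "{..<n}" n1 T U] by (simp add: subsets_def t_def falling_fact_eq_0)
  qed
  also have "real (n choose n1) * falling_fact n1 t * falling_fact n2 u / real (n choose n1)
      = falling_fact n1 t * falling_fact n2 u" by (simp add: n_def)
  finally show ?thesis
    using falling_fact_pos[OF tu] by (simp add: t_def u_def n_def field_simps)
qed

lemma unif_exp_neq:
  assumes "i < n1 + n2" "j < n1 + n2" "i \<noteq> j"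
  shows "unif_exp (arrangements n1 n2) (\<lambda>xs. of_bool (xs ! i \<noteq> xs ! j))
       = 2 * real n1 * real n2 / (real (n1 + n2) * (real (n1 + n2) - 1))"
proof -
  have "unif_exp (arrangements n1 n2) (\<lambda>xs. of_bool (xs ! i \<noteq> xs ! j))
      = unif_exp (arrangements n1 n2) (\<lambda>xs. of_bool (has_pattern {i} {j} xs) + of_bool (has_pattern {j} {i} xs))"
    by (rule unif_exp_cong) (auto simp: has_pattern_def)
  also have "\<dots> = 2 * real n1 * real n2 / (real (n1 + n2) * (real (n1 + n2) - 1))"
    using assms by (simp add: unif_exp_add unif_exp_has_pattern)
  finally show ?thesis .
qed

lemma unif_exp_eq:
  assumes "i < n1 + n2" "j < n1 + n2" "i \<noteq> j"
  shows "unif_exp (arrangements n1 n2) (\<lambda>xs. of_bool (xs ! i = xs ! j))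
       = (real n1 * (real n1 - 1) + real n2 * (real n2 - 1)) / (real (n1 + n2) * (real (n1 + n2) - 1))"
proof -
  have "unif_exp (arrangements n1 n2) (\<lambda>xs. of_bool (xs ! i = xs ! j))
      = unif_exp (arrangements n1 n2) (\<lambda>xs. of_bool (has_pattern {i, j} {} xs) + of_bool (has_pattern {} {i, j} xs))"
    by (rule unif_exp_cong) (auto simp: has_pattern_def)
  also have "\<dots> = (real n1 * (real n1 - 1) + real n2 * (real n2 - 1)) / (real (n1 + n2) * (real (n1 + n2) - 1))"
    using assms by (simp add: unif_exp_add unif_exp_has_pattern add_divide_distrib)
  finally show ?thesis .
qed

lemma unif_exp_alternating:
  assumes "i < n1 + n2" "j < n1 + n2" "k < n1 + n2" "distinct [i, j, k]"
  shows "unif_exp (arrangements n1 n2) (\<lambda>xs. of_bool (xs ! i \<noteq> xs ! j \<and> xs ! j \<noteq> xs ! k))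
       = real n1 * real n2 / (real (n1 + n2) * (real (n1 + n2) - 1))"
proof -
  have "3 \<le> n1 + n2" using length_le_if_distinct_below[of "[i, j, k]"] assms by simp
  have "unif_exp (arrangements n1 n2) (\<lambda>xs. of_bool (xs ! i \<noteq> xs ! j \<and> xs ! j \<noteq> xs ! k))
      = unif_exp (arrangements n1 n2) (\<lambda>xs. of_bool (has_pattern {i, k} {j} xs) + of_bool (has_pattern {j} {i, k} xs))"
    by (rule unif_exp_cong) (auto simp: has_pattern_def)
  also have "\<dots> = (real n1 * (real n1 - 1) * real n2 + real n1 * (real n2 * (real n2 - 1)))
      / (real (n1 + n2) * (real (n1 + n2) - 1) * (real (n1 + n2) - 2))"
    using assms by (simp add: unif_exp_add unif_exp_has_pattern add_divide_distrib)
  also have "\<dots> = real n1 * real n2 * (real (n1 + n2) - 2)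
      / (real (n1 + n2) * (real (n1 + n2) - 1) * (real (n1 + n2) - 2))"
    by (simp add: algebra_simps)
  also have "\<dots> = real n1 * real n2 / (real (n1 + n2) * (real (n1 + n2) - 1))"
    using \<open>3 \<le> n1 + n2\<close> by (simp del: of_nat_add)
  finally show ?thesis .
qed

lemma unif_exp_neq_disjoint_pairs:
  assumes "i < n1 + n2" "j < n1 + n2" "k < n1 + n2" "l < n1 + n2" "distinct [i, j, k, l]"
  shows "unif_exp (arrangements n1 n2) (\<lambda>xs. of_bool (xs ! i \<noteq> xs ! j \<and> xs ! k \<noteq> xs ! l))
       = 4 * real n1 * (real n1 - 1) * real n2 * (real n2 - 1)
         / (real (n1 + n2) * (real (n1 + n2) - 1) * (real (n1 + n2) - 2) * (real (n1 + n2) - 3))"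
proof -
  have "unif_exp (arrangements n1 n2) (\<lambda>xs. of_bool (xs ! i \<noteq> xs ! j \<and> xs ! k \<noteq> xs ! l))
      = unif_exp (arrangements n1 n2) (\<lambda>xs. of_bool (has_pattern {i, k} {j, l} xs) + of_bool (has_pattern {i, l} {j, k} xs)
          + of_bool (has_pattern {j, k} {i, l} xs) + of_bool (has_pattern {j, l} {i, k} xs))"
    by (rule unif_exp_cong) (auto simp: has_pattern_def)
  also have "\<dots> = 4 * real n1 * (real n1 - 1) * real n2 * (real n2 - 1)
         / (real (n1 + n2) * (real (n1 + n2) - 1) * (real (n1 + n2) - 2) * (real (n1 + n2) - 3))"
    using assms by (simp add: unif_exp_add unif_exp_has_pattern add_divide_distrib[symmetric] algebra_simps)
  finally show ?thesis .
qed

lemma unif_exp_eq_neq_disjoint_pairs: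
  assumes "i < n1 + n2" "j < n1 + n2" "k < n1 + n2" "l < n1 + n2" "distinct [i, j, k, l]"
  shows "unif_exp (arrangements n1 n2) (\<lambda>xs. of_bool (xs ! i = xs ! j \<and> xs ! k \<noteq> xs ! l))
       = 2 * (real n1 * (real n1 - 1) * (real n1 - 2) * real n2 + real n1 * real n2 * (real n2 - 1) * (real n2 - 2))
         / (real (n1 + n2) * (real (n1 + n2) - 1) * (real (n1 + n2) - 2) * (real (n1 + n2) - 3))"
proof -
  have "unif_exp (arrangements n1 n2) (\<lambda>xs. of_bool (xs ! i = xs ! j \<and> xs ! k \<noteq> xs ! l))
      = unif_exp (arrangements n1 n2) (\<lambda>xs. of_bool (has_pattern {i, j, k} {l} xs) + of_bool (has_pattern {i, j, l} {k} xs)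
          + of_bool (has_pattern {k} {i, j, l} xs) + of_bool (has_pattern {l} {i, j, k} xs))"
    by (rule unif_exp_cong) (auto simp: has_pattern_def)
  also have "\<dots> = 2 * (real n1 * (real n1 - 1) * (real n1 - 2) * real n2 + real n1 * real n2 * (real n2 - 1) * (real n2 - 2))
         / (real (n1 + n2) * (real (n1 + n2) - 1) * (real (n1 + n2) - 2) * (real (n1 + n2) - 3))"
    using assms by (simp add: unif_exp_add unif_exp_has_pattern add_divide_distrib[symmetric] algebra_simps)
  finally show ?thesis .
qed

section \<open>Runs and changes\<close>

definition changes :: "bool list \<Rightarrow> real" where
  "changes xs = (\<Sum>i<length xs - 1. of_bool (xs ! i \<noteq> xs ! Suc i))"

definition ends_agree :: "bool list \<Rightarrow> real" where
  "ends_agree xs = of_bool (xs ! 0 = xs ! (length xs - 1))"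

lemma runs_eq_sum: "real (runs a xs) = (\<Sum>i<length xs. of_bool (xs ! i = a \<and> (i = 0 \<or> xs ! (i - 1) \<noteq> a)))"
proof -
  have "{i. i < length xs \<and> xs ! i = a \<and> (i = 0 \<or> xs ! (i - 1) \<noteq> a)}
      = {..<length xs} \<inter> {i. xs ! i = a \<and> (i = 0 \<or> xs ! (i - 1) \<noteq> a)}" by auto
  then show ?thesis unfolding runs_def by simp
qed

lemma twice_run_starts_sum:
  fixes f :: "nat \<Rightarrow> bool"
  shows "2 * (\<Sum>i\<le>m. of_bool (f i = a \<and> (i = 0 \<or> f (i - 1) \<noteq> a)) :: real)
       = (\<Sum>i<m. of_bool (f i \<noteq> f (Suc i))) + of_bool (f 0 = a) + of_bool (f m = a)"
proof (induction m)
  case (Suc m)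
  have "of_bool (f m = a) + 2 * of_bool (f (Suc m) = a \<and> f m \<noteq> a)
      = of_bool (f m \<noteq> f (Suc m)) + (of_bool (f (Suc m) = a) :: real)"
    by (cases "f m"; cases "f (Suc m)"; cases a) simp_all
  with Suc show ?case by (simp add: distrib_left)
qed simp

lemma twice_runs_eq:
  assumes "xs \<noteq> []"
  shows "2 * real (runs a xs) = changes xs + of_bool (xs ! 0 = a) + of_bool (xs ! (length xs - 1) = a)"
proof -
  obtain m where m: "length xs = Suc m" using assms by (cases xs) auto
  show ?thesis
    unfolding runs_eq_sum changes_def m lessThan_Suc_atMost using twice_run_starts_sum[of "(!) xs" a m] by simp
qed

lemma RM_eq_changes_ends_agree:
  assumes "xs \<noteq> []"
  shows "real (RM xs) = (1 + changes xs + ends_agree xs) / 2"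
  using twice_runs_eq[OF assms, of True] twice_runs_eq[OF assms, of False]
  unfolding RM_def ends_agree_def of_nat_max
  by (cases "xs ! 0"; cases "xs ! (length xs - 1)") (simp_all add: max_def)

lemma arrangement_ne_Nil: "1 \<le> n1 + n2 \<Longrightarrow> xs \<in> arrangements n1 n2 \<Longrightarrow> xs \<noteq> []"
  by (auto dest: length_arrangements)

lemma RM_arrangements_1_1:
  assumes "xs \<in> arrangements 1 1"
  shows "real (RM xs) = 1"
proof -
  obtain a b where "xs = [a, b]"
    using length_arrangements[OF assms] by (auto simp: numeral_2_eq_2 length_Suc_conv)
  moreover have "a \<noteq> b" using assms calculation by (auto simp: arrangements_def split: if_splits)
  ultimately show ?thesis by (simp add: RM_eq_changes_ends_agree changes_def ends_agree_def)
qed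

section \<open>Moments\<close>

lemma changes_arrangements:
  "xs \<in> arrangements n1 n2 \<Longrightarrow> changes xs = (\<Sum>i<n1 + n2 - 1. of_bool (xs ! i \<noteq> xs ! Suc i))"
  by (simp add: changes_def length_arrangements)

lemma unif_exp_changes:
  assumes "2 \<le> n1 + n2"
  shows "unif_exp (arrangements n1 n2) changes = 2 * real n1 * real n2 / real (n1 + n2)"
proof -
  define N where "N = real (n1 + n2)"
  have "unif_exp (arrangements n1 n2) changes
      = (\<Sum>i<n1 + n2 - 1. unif_exp (arrangements n1 n2) (\<lambda>xs. of_bool (xs ! i \<noteq> xs ! Suc i)))"
    by (simp only: unif_exp_cong[OF changes_arrangements] unif_exp_sum)
  also have "\<dots> = (\<Sum>i<n1 + n2 - 1. 2 * real n1 * real n2 / (N * (N - 1)))"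
    unfolding N_def by (intro sum.cong refl unif_exp_neq) auto
  also have "\<dots> = (N - 1) * (2 * real n1 * real n2 / (N * (N - 1)))"
    using assms by (simp add: N_def)
  also have "\<dots> = 2 * real n1 * real n2 / N"
    using assms by (simp add: N_def)
  finally show ?thesis unfolding N_def .
qed

lemma unif_exp_ends_agree:
  assumes "2 \<le> n1 + n2"
  shows "unif_exp (arrangements n1 n2) ends_agree
       = (real n1 * (real n1 - 1) + real n2 * (real n2 - 1)) / (real (n1 + n2) * (real (n1 + n2) - 1))"
proof -
  have "unif_exp (arrangements n1 n2) ends_agree
      = unif_exp (arrangements n1 n2) (\<lambda>xs. of_bool (xs ! 0 = xs ! (n1 + n2 - 1)))"
    by (rule unif_exp_cong) (simp add: ends_agree_def length_arrangements)
  also have "\<dots> = (real n1 * (real n1 - 1) + real n2 * (real n2 - 1)) / (real (n1 + n2) * (real (n1 + n2) - 1))"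
    using assms by (intro unif_exp_eq) auto
  finally show ?thesis .
qed

lemma unif_exp_changes_sq:
  assumes "2 \<le> n1 + n2"
  shows "unif_exp (arrangements n1 n2) (\<lambda>xs. (changes xs)^2)
       = 2 * real n1 * real n2 / real (n1 + n2)
         + 2 * (real (n1 + n2) - 2) * (real n1 * real n2 / (real (n1 + n2) * (real (n1 + n2) - 1)))
         + 4 * real n1 * (real n1 - 1) * real n2 * (real n2 - 1) / (real (n1 + n2) * (real (n1 + n2) - 1))"
proof -
  define N where "N = real (n1 + n2)"
  define m where "m = n1 + n2 - 2"
  define p where "p i j = unif_exp (arrangements n1 n2) (\<lambda>xs. of_bool (xs ! i \<noteq> xs ! Suc i \<and> xs ! j \<noteq> xs ! Suc j))" for i j
  have m: "n1 + n2 - 1 = Suc m" "real m = N - 2" using assms by (simp_all add: m_def N_def)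
  have "unif_exp (arrangements n1 n2) (\<lambda>xs. (changes xs)^2)
      = unif_exp (arrangements n1 n2) (\<lambda>xs. \<Sum>i\<le>m. \<Sum>j\<le>m. of_bool (xs ! i \<noteq> xs ! Suc i \<and> xs ! j \<noteq> xs ! Suc j))"
    unfolding power2_eq_square of_bool_conj
    by (rule unif_exp_cong) (simp only: changes_arrangements m(1) lessThan_Suc_atMost sum_product)
  also have "\<dots> = (\<Sum>i\<le>m. \<Sum>j\<le>m. p i j)"
    by (simp only: unif_exp_sum p_def)
  also have "\<dots> = real (Suc m) * (2 * real n1 * real n2 / (N * (N - 1)))
      + 2 * real m * (real n1 * real n2 / (N * (N - 1)))
      + real m * (real m - 1) * (4 * real n1 * (real n1 - 1) * real n2 * (real n2 - 1) / (N * (N - 1) * (N - 2) * (N - 3)))"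
  proof (rule sum_square_band)
    fix i assume "i \<le> m"
    then show "p i i = 2 * real n1 * real n2 / (N * (N - 1))"
      unfolding p_def N_def conj_absorb using m(1) by (intro unif_exp_neq) auto
  next
    fix i assume "i < m"
    then show "p i (Suc i) = real n1 * real n2 / (N * (N - 1))"
      unfolding p_def N_def using m(1) by (intro unif_exp_alternating) auto
    from \<open>i < m\<close> show "p (Suc i) i = real n1 * real n2 / (N * (N - 1))"
      unfolding p_def N_def conj_commute[of "_ ! Suc i \<noteq> _"] using m(1) by (intro unif_exp_alternating) auto
  next
    fix i j assume "i \<le> m" "j \<le> m" "Suc i < j \<or> Suc j < i"
    then show "p i j = 4 * real n1 * (real n1 - 1) * real n2 * (real n2 - 1) / (N * (N - 1) * (N - 2) * (N - 3))"
      unfolding p_def N_def using m(1) by (intro unif_exp_neq_disjoint_pairs) auto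
  qed
  also have "\<dots> = 2 * real n1 * real n2 / N + 2 * (N - 2) * (real n1 * real n2 / (N * (N - 1)))
         + 4 * real n1 * (real n1 - 1) * real n2 * (real n2 - 1) / (N * (N - 1))"
  proof -
    have N: "N \<noteq> 0" "N - 1 \<noteq> 0" using assms by (auto simp: N_def)
    have "real (Suc m) * (2 * real n1 * real n2 / (N * (N - 1))) = 2 * real n1 * real n2 / N"
      using N m(2) by simp
    moreover have "real m * (real m - 1) * (4 * real n1 * (real n1 - 1) * real n2 * (real n2 - 1) / (N * (N - 1) * (N - 2) * (N - 3)))
        = 4 * real n1 * (real n1 - 1) * real n2 * (real n2 - 1) / (N * (N - 1))"
    proof (cases "4 \<le> n1 + n2")
      case True
      then have "N - 2 \<noteq> 0" "N - 3 \<noteq> 0" by (auto simp: N_def)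
      then have "(N - 2) * (N - 2 - 1) * (X / (N * (N - 1) * (N - 2) * (N - 3))) = X / (N * (N - 1))" for X
        using N by (simp add: divide_simps)
      then show ?thesis unfolding m(2) .
    next
      case False
      then have "n1 \<le> 1 \<or> n2 \<le> 1" "m \<le> 1" using assms by (auto simp: m_def)
      then have "4 * real n1 * (real n1 - 1) * real n2 * (real n2 - 1) = 0" "real m * (real m - 1) = 0"
        by (auto simp: le_Suc_eq)
      then show ?thesis by (simp only:)
    qed
    ultimately show ?thesis unfolding m(2) by (simp only:)
  qed
  finally show ?thesis unfolding N_def .
qed

lemma unif_exp_changes_ends_agree:
  assumes "3 \<le> n1 + n2"
  shows "unif_exp (arrangements n1 n2) (\<lambda>xs. changes xs * ends_agree xs)
       = 2 * (real n1 * real n2 / (real (n1 + n2) * (real (n1 + n2) - 1)))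
         + 2 * (real n1 * (real n1 - 1) * (real n1 - 2) * real n2 + real n1 * real n2 * (real n2 - 1) * (real n2 - 2))
           / (real (n1 + n2) * (real (n1 + n2) - 1) * (real (n1 + n2) - 2))"
proof -
  define N where "N = real (n1 + n2)"
  define k where "k = n1 + n2 - 3"
  define q where "q i = unif_exp (arrangements n1 n2) (\<lambda>xs. of_bool (xs ! i \<noteq> xs ! Suc i \<and> xs ! 0 = xs ! Suc (Suc k)))" for i
  have k: "n1 + n2 - 1 = Suc (Suc k)" "real k = N - 3" using assms by (simp_all add: k_def N_def)
  have "unif_exp (arrangements n1 n2) (\<lambda>xs. changes xs * ends_agree xs)
      = unif_exp (arrangements n1 n2) (\<lambda>xs. \<Sum>i<Suc (Suc k). of_bool (xs ! i \<noteq> xs ! Suc i \<and> xs ! 0 = xs ! Suc (Suc k)))"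
    by (rule unif_exp_cong)
      (simp only: changes_arrangements ends_agree_def length_arrangements k(1) sum_distrib_right of_bool_conj)
  also have "\<dots> = (\<Sum>i<Suc (Suc k). q i)"
    by (simp only: unif_exp_sum q_def)
  also have "\<dots> = 2 * (real n1 * real n2 / (N * (N - 1)))
      + real k * (2 * (real n1 * (real n1 - 1) * (real n1 - 2) * real n2 + real n1 * real n2 * (real n2 - 1) * (real n2 - 2))
          / (N * (N - 1) * (N - 2) * (N - 3)))"
  proof (rule sum_lessThan_ends_interior)
    have "q 0 = unif_exp (arrangements n1 n2) (\<lambda>xs. of_bool (xs ! 0 \<noteq> xs ! 1 \<and> xs ! 1 \<noteq> xs ! Suc (Suc k)))"
      unfolding q_def by (rule unif_exp_cong) auto
    also have "\<dots> = real n1 * real n2 / (N * (N - 1))"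
      unfolding N_def using k(1) by (intro unif_exp_alternating) auto
    finally show "q 0 = real n1 * real n2 / (N * (N - 1))" .
    have "q (Suc k) = unif_exp (arrangements n1 n2) (\<lambda>xs. of_bool (xs ! 0 \<noteq> xs ! Suc k \<and> xs ! Suc k \<noteq> xs ! Suc (Suc k)))"
      unfolding q_def by (rule unif_exp_cong) auto
    also have "\<dots> = real n1 * real n2 / (N * (N - 1))"
      unfolding N_def using k(1) by (intro unif_exp_alternating) auto
    finally show "q (Suc k) = real n1 * real n2 / (N * (N - 1))" .
  next
    fix i assume "0 < i" "i \<le> k"
    have "q i = unif_exp (arrangements n1 n2) (\<lambda>xs. of_bool (xs ! 0 = xs ! Suc (Suc k) \<and> xs ! i \<noteq> xs ! Suc i))"
      unfolding q_def by (rule unif_exp_cong) auto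
    also have "\<dots> = 2 * (real n1 * (real n1 - 1) * (real n1 - 2) * real n2 + real n1 * real n2 * (real n2 - 1) * (real n2 - 2))
          / (N * (N - 1) * (N - 2) * (N - 3))"
      unfolding N_def using k(1) \<open>0 < i\<close> \<open>i \<le> k\<close> by (intro unif_exp_eq_neq_disjoint_pairs) auto
    finally show "q i = 2 * (real n1 * (real n1 - 1) * (real n1 - 2) * real n2 + real n1 * real n2 * (real n2 - 1) * (real n2 - 2))
          / (N * (N - 1) * (N - 2) * (N - 3))" .
  qed
  also have "real k * (2 * (real n1 * (real n1 - 1) * (real n1 - 2) * real n2 + real n1 * real n2 * (real n2 - 1) * (real n2 - 2))
          / (N * (N - 1) * (N - 2) * (N - 3)))
      = 2 * (real n1 * (real n1 - 1) * (real n1 - 2) * real n2 + real n1 * real n2 * (real n2 - 1) * (real n2 - 2))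
          / (N * (N - 1) * (N - 2))"
  proof (cases "4 \<le> n1 + n2")
    case True
    then have "N \<noteq> 0" "N - 1 \<noteq> 0" "N - 2 \<noteq> 0" "N - 3 \<noteq> 0" by (auto simp: N_def)
    then have "(N - 3) * (X / (N * (N - 1) * (N - 2) * (N - 3))) = X / (N * (N - 1) * (N - 2))" for X
      by (simp add: divide_simps)
    then show ?thesis unfolding k(2) .
  next
    case False
    then have "(n1, n2) \<in> {(0, 3), (1, 2), (2, 1), (3, 0)}" "k = 0" using assms by (auto simp: k_def)
    then have "2 * (real n1 * (real n1 - 1) * (real n1 - 2) * real n2 + real n1 * real n2 * (real n2 - 1) * (real n2 - 2)) = 0"
      "real k = 0"
      by auto
    then show ?thesis by (simp only:)
  qed
  finally show ?thesis unfolding N_def .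
qed

lemma unif_exp_RM:
  assumes "1 \<le> n1 + n2"
  shows "unif_exp (arrangements n1 n2) (\<lambda>xs. real (RM xs))
       = (1 + unif_exp (arrangements n1 n2) changes + unif_exp (arrangements n1 n2) ends_agree) / 2"
proof -
  have "unif_exp (arrangements n1 n2) (\<lambda>xs. real (RM xs))
      = unif_exp (arrangements n1 n2) (\<lambda>xs. 1 / 2 + 1 / 2 * changes xs + 1 / 2 * ends_agree xs)"
    using assms by (intro unif_exp_cong) (simp add: RM_eq_changes_ends_agree arrangement_ne_Nil add_divide_distrib)
  also have "\<dots> = 1 / 2 + 1 / 2 * unif_exp (arrangements n1 n2) changes + 1 / 2 * unif_exp (arrangements n1 n2) ends_agree"
    by (simp only: unif_exp_add unif_exp_cmult unif_exp_const_arrangements)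
  finally show ?thesis by simp
qed

lemma unif_exp_RM_sq:
  assumes "1 \<le> n1 + n2"
  shows "unif_exp (arrangements n1 n2) (\<lambda>xs. (real (RM xs))^2)
       = (1 + 2 * unif_exp (arrangements n1 n2) changes + 3 * unif_exp (arrangements n1 n2) ends_agree
          + unif_exp (arrangements n1 n2) (\<lambda>xs. (changes xs)^2)
          + 2 * unif_exp (arrangements n1 n2) (\<lambda>xs. changes xs * ends_agree xs)) / 4"
proof -
  have "(ends_agree xs)^2 = ends_agree xs" for xs by (simp add: ends_agree_def)
  then have "unif_exp (arrangements n1 n2) (\<lambda>xs. (real (RM xs))^2)
      = unif_exp (arrangements n1 n2) (\<lambda>xs. 1 / 4 + 1 / 2 * changes xs + 3 / 4 * ends_agree xs
          + 1 / 4 * (changes xs)^2 + 1 / 2 * (changes xs * ends_agree xs))"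
    using assms by (intro unif_exp_cong) (simp add: RM_eq_changes_ends_agree arrangement_ne_Nil power2_eq_square field_simps)
  also have "\<dots> = 1 / 4 + 1 / 2 * unif_exp (arrangements n1 n2) changes + 3 / 4 * unif_exp (arrangements n1 n2) ends_agree
      + 1 / 4 * unif_exp (arrangements n1 n2) (\<lambda>xs. (changes xs)^2)
      + 1 / 2 * unif_exp (arrangements n1 n2) (\<lambda>xs. changes xs * ends_agree xs)"
    by (simp only: unif_exp_add unif_exp_cmult unif_exp_const_arrangements)
  finally show ?thesis by simp
qed

lemma mean_from_moments:
  fixes x y n c e :: real
  assumes "n = x + y" "n \<noteq> 0" "n \<noteq> 1"
    and "c = 2 * x * y / n"
    and "e = (x * (x - 1) + y * (y - 1)) / (n * (n - 1))"
  shows "(1 + c + e) / 2 = 2 + (n * (x - 1) * (y - 1) - 2 * x * y) / (n * (n - 1))"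
  using assms(2,3) unfolding assms(4,5) by (simp add: divide_simps) (simp add: assms(1) algebra_simps)

lemma variance_from_moments:
  fixes x y n c e cc ce :: real
  assumes "n = x + y" "n \<noteq> 0" "n \<noteq> 1" "n \<noteq> 2"
    and "c = 2 * x * y / n"
    and "e = (x * (x - 1) + y * (y - 1)) / (n * (n - 1))"
    and "cc = 2 * x * y / n + 2 * (n - 2) * (x * y / (n * (n - 1))) + 4 * x * (x - 1) * y * (y - 1) / (n * (n - 1))"
    and "ce = 2 * (x * y / (n * (n - 1))) + 2 * (x * (x - 1) * (x - 2) * y + x * y * (y - 1) * (y - 2)) / (n * (n - 1) * (n - 2))"
  shows "(1 + 2 * c + 3 * e + cc + 2 * ce) / 4 - ((1 + c + e) / 2)^2
       = x * y * (x^3 + y^3 + x^3 * y + x * y^3 - x^2 - y^2 + 2 * x^2 * y^2 - 5 * x^2 * y - 5 * x * y^2 + 6 * x * y)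
         / (n^2 * (n - 1)^2 * (n - 2))"
  using assms(2-4) unfolding assms(5-8) by (simp add: divide_simps) (simp add: assms(1) algebra_simps power2_eq_square power3_eq_cube)

theorem theorem1:
  fixes n1 n2 :: nat
  assumes "n1 \<ge> 1" and "n2 \<ge> 1"
  defines "n \<equiv> n1 + n2"
  shows "(unif_exp (arrangements n1 n2) (\<lambda>xs. real (RM xs)) =
           2 + (real n * (real n1 - 1) * (real n2 - 1) - 2 * real n1 * real n2)
               / (real n * (real n - 1))) \<and>
         (unif_var (arrangements n1 n2) (\<lambda>xs. real (RM xs)) =
           real n1 * real n2 *
             (real n1^3 + real n2^3 + real n1^3 * real n2 + real n1 * real n2^3
              - real n1^2 - real n2^2 + 2 * real n1^2 * real n2^2
              - 5 * real n1^2 * real n2 - 5 * real n1 * real n2^2 + 6 * real n1 * real n2)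
           / ((real n)^2 * (real n - 1)^2 * (real n - 2)))"
proof (cases "n = 2")
  case True
  \<comment> \<open>Here R_M = 1 identically, and the claimed variance is 0 only through division by n - 2 = 0.\<close>
  then have "n1 = 1" "n2 = 1" using assms by auto
  then have "unif_exp (arrangements n1 n2) (\<lambda>xs. real (RM xs)) = 1"
      "unif_exp (arrangements n1 n2) (\<lambda>xs. (real (RM xs))^2) = 1"
    by (simp_all add: unif_exp_cong[where g = "\<lambda>_. 1"] RM_arrangements_1_1 unif_exp_const_arrangements)
  then show ?thesis
    using \<open>n1 = 1\<close> \<open>n2 = 1\<close> True by (simp add: unif_var_eq finite_arrangements arrangements_ne_empty)
next
  case False
  then have "3 \<le> n1 + n2" using assms by (auto simp: n_def)
  then have "1 \<le> n1 + n2" "2 \<le> n1 + n2" by simp_all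
  note moments = unif_exp_changes[OF \<open>2 \<le> n1 + n2\<close>] unif_exp_ends_agree[OF \<open>2 \<le> n1 + n2\<close>]
    unif_exp_changes_sq[OF \<open>2 \<le> n1 + n2\<close>] unif_exp_changes_ends_agree[OF \<open>3 \<le> n1 + n2\<close>]
  show ?thesis (is "?mean \<and> ?var")
  proof
    show ?mean
      unfolding n_def unif_exp_RM[OF \<open>1 \<le> n1 + n2\<close>]
      by (rule mean_from_moments[OF _ _ _ moments(1,2)]) (use \<open>3 \<le> n1 + n2\<close> in simp_all)
    show ?var
      unfolding n_def unif_var_eq[OF finite_arrangements arrangements_ne_empty]
        unif_exp_RM_sq[OF \<open>1 \<le> n1 + n2\<close>] unif_exp_RM[OF \<open>1 \<le> n1 + n2\<close>]
      by (rule variance_from_moments[OF _ _ _ _ moments]) (use \<open>3 \<le> n1 + n2\<close> in simp_all)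
  qed
qed

end
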